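(* Every pair-symmetric grid-labelled graph (with at least one edge) is separable.
   Context: A grid-labelled graph of type $(a,b)$ is a simple graph $G$ whose vertex set is the grid $[a]\times[b]$. If $G$ has $m\ge1$ edges, $\rho(G)=L(G)/(2m)$, where $L(G)$ is the combinatorial Laplacian, viewed as a density matrix on $\mathbb{C}^a\otimes\mathbb{C}^b$ with vertex $(i,j)$ corresponding to $|i\rangle\otimes|j\rangle$; $G$ is separable if $\rho(G)$ is a convex combination of tensor products of density matrices. An edge $\{(i,j),(k,l)\}$ is diagonal if $i\neq k$ and $j\neq l$. $G$ is pair-symmetric if for each diagonal edge $\{(i,j),(k,l)\}\in E(G)$, the edge $\{(k,j),(i,l)\}$ also belongs to $E(G)$. *)

theory Defs
  imports Complex_Main
begin

(* Matrices of dimension n are functions nat => nat => complex, only the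
   entries with indices < n being relevant. Grid vertices are (i,j) with
   i < a, j < b (0-based); vertex (i,j) corresponds to basis index i*b+j,
   i.e. |i> (x) |j> in C^a (x) C^b. *)

definition grid :: "nat \<Rightarrow> nat \<Rightarrow> (nat \<times> nat) set" where
  "grid a b = {0..<a} \<times> {0..<b}"

definition grid_graph :: "nat \<Rightarrow> nat \<Rightarrow> (nat \<times> nat) set set \<Rightarrow> bool" where
  "grid_graph a b E \<longleftrightarrow>
     (\<forall>e\<in>E. \<exists>u v. u \<in> grid a b \<and> v \<in> grid a b \<and> u \<noteq> v \<and> e = {u, v})"

definition vtx :: "nat \<Rightarrow> nat \<Rightarrow> nat \<times> nat" where
  "vtx b r = (r div b, r mod b)"

definition laplacian :: "nat \<Rightarrow> (nat \<times> nat) set set \<Rightarrow> nat \<Rightarrow> nat \<Rightarrow> complex" where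
  "laplacian b E r c =
     (if r = c then of_nat (card {e \<in> E. vtx b r \<in> e})
      else if {vtx b r, vtx b c} \<in> E then -1 else 0)"

definition rho :: "nat \<Rightarrow> (nat \<times> nat) set set \<Rightarrow> nat \<Rightarrow> nat \<Rightarrow> complex" where
  "rho b E r c = laplacian b E r c / of_nat (2 * card E)"

definition density_matrix :: "nat \<Rightarrow> (nat \<Rightarrow> nat \<Rightarrow> complex) \<Rightarrow> bool" where
  "density_matrix n M \<longleftrightarrow>
     (\<forall>i<n. \<forall>j<n. M j i = cnj (M i j)) \<and>
     (\<forall>v :: nat \<Rightarrow> complex. 0 \<le> Re (\<Sum>i<n. \<Sum>j<n. cnj (v i) * M i j * v j)) \<and>
     (\<Sum>i<n. M i i) = 1"

definition kron :: "nat \<Rightarrow> (nat \<Rightarrow> nat \<Rightarrow> complex) \<Rightarrow> (nat \<Rightarrow> nat \<Rightarrow> complex)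
                      \<Rightarrow> nat \<Rightarrow> nat \<Rightarrow> complex" where
  "kron b A B r c = A (r div b) (c div b) * B (r mod b) (c mod b)"

definition separable :: "nat \<Rightarrow> nat \<Rightarrow> (nat \<Rightarrow> nat \<Rightarrow> complex) \<Rightarrow> bool" where
  "separable a b R \<longleftrightarrow>
     (\<exists>(N::nat) (p :: nat \<Rightarrow> real) A B.
        (\<forall>k<N. 0 \<le> p k \<and> density_matrix a (A k) \<and> density_matrix b (B k)) \<and>
        (\<Sum>k<N. p k) = 1 \<and>
        (\<forall>r<a*b. \<forall>c<a*b. R r c = (\<Sum>k<N. complex_of_real (p k) * kron b (A k) (B k) r c)))"

definition pair_symmetric :: "(nat \<times> nat) set set \<Rightarrow> bool" where
  "pair_symmetric E \<longleftrightarrow>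
     (\<forall>i j k l. {(i, j), (k, l)} \<in> E \<and> i \<noteq> k \<and> j \<noteq> l \<longrightarrow> {(k, j), (i, l)} \<in> E)"

end

theory Submission
  imports Defs
begin

(* The Laplacian is the sum over the edges {u, v} of the rank-one matrices |u - v><u - v|.
   For an edge {(i,j), (k,l)} and its partner {(k,j), (i,l)} from the definition of
   pair-symmetry, the sum and the difference of the two edge vectors are the product vectors
   (|i> + |k>) (x) (|j> - |l>) and (|i> - |k>) (x) (|j> + |l>), so by the parallelogram law
   the two edge terms together are a positive combination of product states. Pair-symmetry
   makes the partner map an involution of the edge set, hence L is the average of these pair
   sums, and normalising gives a separable decomposition of rho. *)

definition ket :: "nat \<Rightarrow> nat \<Rightarrow> complex" where
  "ket i t = (if t = i then 1 else 0)"

definition outer :: "(nat \<Rightarrow> complex) \<Rightarrow> nat \<Rightarrow> nat \<Rightarrow> complex" where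
  "outer x i j = x i * cnj (x j)"

definition sqnorm :: "nat \<Rightarrow> (nat \<Rightarrow> complex) \<Rightarrow> real" where
  "sqnorm n x = (\<Sum>i<n. (cmod (x i))\<^sup>2)"

definition normalized :: "nat \<Rightarrow> (nat \<Rightarrow> complex) \<Rightarrow> nat \<Rightarrow> complex" where
  "normalized n x i = x i / of_real (sqrt (sqnorm n x))"

definition tensor :: "nat \<Rightarrow> (nat \<Rightarrow> complex) \<Rightarrow> (nat \<Rightarrow> complex) \<Rightarrow> nat \<Rightarrow> complex" where
  "tensor b x y r = x (r div b) * y (r mod b)"

lemma sqnorm_nonneg: "0 \<le> sqnorm n x"
  by (simp add: sqnorm_def sum_nonneg)

lemma sqnorm_eq_0D: "sqnorm n x = 0 \<Longrightarrow> i < n \<Longrightarrow> x i = 0"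
  by (simp add: sqnorm_def sum_nonneg_eq_0_iff)

lemma density_matrix_outer:
  assumes "sqnorm n x = 1"
  shows "density_matrix n (outer x)"
  unfolding density_matrix_def
proof (intro conjI allI impI)
  fix v :: "nat \<Rightarrow> complex"
  define z where "z = (\<Sum>j<n. cnj (x j) * v j)"
  have "cnj z = (\<Sum>i<n. x i * cnj (v i))"
    by (simp add: z_def)
  then have "cnj z * z = (\<Sum>i<n. \<Sum>j<n. x i * cnj (v i) * (cnj (x j) * v j))"
    unfolding z_def by (simp only: sum_product)
  then have "(\<Sum>i<n. \<Sum>j<n. cnj (v i) * outer x i j * v j) = cnj z * z"
    by (simp add: outer_def ac_simps)
  also have "\<dots> = of_real ((cmod z)\<^sup>2)"
    by (simp add: complex_norm_square mult.commute flip: of_real_power)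
  finally show "0 \<le> Re (\<Sum>i<n. \<Sum>j<n. cnj (v i) * outer x i j * v j)"
    by simp
next
  have "(\<Sum>i<n. outer x i i) = of_real (sqnorm n x)"
    by (simp add: outer_def sqnorm_def complex_norm_square flip: of_real_power)
  with assms show "(\<Sum>i<n. outer x i i) = 1"
    by simp
qed (simp add: outer_def)

lemma sqnorm_normalized:
  assumes "sqnorm n x \<noteq> 0"
  shows "sqnorm n (normalized n x) = 1"
proof -
  have "sqnorm n (normalized n x) = sqnorm n x / sqnorm n x"
    using sqnorm_nonneg[of n x]
    by (simp add: sqnorm_def normalized_def norm_divide power_divide flip: sum_divide_distrib)
  with assms show ?thesis
    by simp
qed

lemma outer_normalized: "outer (normalized n x) i j = outer x i j / of_real (sqnorm n x)"
proof -
  have "(complex_of_real (sqrt (sqnorm n x)))\<^sup>2 = of_real (sqnorm n x)"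
    using sqnorm_nonneg[of n x] by (simp flip: of_real_power)
  then show ?thesis
    by (simp add: outer_def normalized_def power2_eq_square)
qed

lemma kron_outer_eq_0:
  assumes "r < a * b" and "sqnorm a x * sqnorm b y = 0"
  shows "kron b (outer x) (outer y) r c = 0"
proof -
  have "b > 0"
    using assms(1) by (cases b) auto
  then have "r div b < a" and "r mod b < b"
    using assms(1) by (simp_all add: less_mult_imp_div_less)
  with assms(2) show ?thesis
    by (auto simp: kron_def outer_def dest: sqnorm_eq_0D)
qed

lemma separable_sum_kron_outer_nonzero:
  fixes a b :: nat and x y :: "'i \<Rightarrow> nat \<Rightarrow> complex"
  defines "w k \<equiv> sqnorm a (x k) * sqnorm b (y k)"
  assumes "finite I" and "I \<noteq> {}" and nonzero: "\<And>k. k \<in> I \<Longrightarrow> w k \<noteq> 0"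
    and R: "\<And>r c. r < a * b \<Longrightarrow> c < a * b \<Longrightarrow>
      R r c = (\<Sum>k\<in>I. kron b (outer (x k)) (outer (y k)) r c) / of_real (\<Sum>k\<in>I. w k)"
  shows "separable a b R"
proof -
  define T where "T = (\<Sum>k\<in>I. w k)"
  have w_pos: "0 < w k" if "k \<in> I" for k
    using nonzero[OF that] by (simp add: w_def sqnorm_nonneg less_le)
  then have "T > 0"
    using assms(2,3) by (simp add: T_def sum_pos)
  obtain f where f: "bij_betw f {..<card I} I"
    using ex_bij_betw_nat_finite[OF assms(2)] by (auto simp: atLeast0LessThan)
  define p where "p k = w (f k) / T" for k
  define A where "A k = outer (normalized a (x (f k)))" for k
  define B where "B k = outer (normalized b (y (f k)))" for k
  have summand: "complex_of_real (p k) * kron b (A k) (B k) r c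
      = kron b (outer (x (f k))) (outer (y (f k))) r c / of_real T" if "k < card I" for k r c
  proof -
    have "w (f k) \<noteq> 0"
      using nonzero f that by (auto dest: bij_betwE)
    then show ?thesis
      by (simp add: p_def A_def B_def w_def kron_def outer_normalized)
  qed
  show ?thesis
    unfolding separable_def
  proof (intro exI conjI allI impI)
    fix k assume "k < card I"
    then have "f k \<in> I"
      using f by (auto dest: bij_betwE)
    then have "sqnorm a (x (f k)) \<noteq> 0" and "sqnorm b (y (f k)) \<noteq> 0"
      using nonzero by (auto simp: w_def)
    then show "density_matrix a (A k)" and "density_matrix b (B k)"
      by (simp_all add: A_def B_def density_matrix_outer sqnorm_normalized)
    show "0 \<le> p k"
      using w_pos[OF \<open>f k \<in> I\<close>] \<open>T > 0\<close> by (simp add: p_def)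
  next
    show "(\<Sum>k<card I. p k) = 1"
      using \<open>T > 0\<close> by (simp add: p_def T_def sum.reindex_bij_betw[OF f] flip: sum_divide_distrib)
  next
    fix r c assume "r < a * b" and "c < a * b"
    then show "R r c = (\<Sum>k<card I. complex_of_real (p k) * kron b (A k) (B k) r c)"
      using sum.reindex_bij_betw[OF f, of "\<lambda>k. kron b (outer (x k)) (outer (y k)) r c"]
      by (simp add: R summand T_def flip: sum_divide_distrib)
  qed
qed

lemma separable_sum_kron_outer:
  fixes a b :: nat and x y :: "'i \<Rightarrow> nat \<Rightarrow> complex"
  defines "w k \<equiv> sqnorm a (x k) * sqnorm b (y k)"
  assumes "finite I" and "(\<Sum>k\<in>I. w k) \<noteq> 0"
    and R: "\<And>r c. r < a * b \<Longrightarrow> c < a * b \<Longrightarrow>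
      R r c = (\<Sum>k\<in>I. kron b (outer (x k)) (outer (y k)) r c) / of_real (\<Sum>k\<in>I. w k)"
  shows "separable a b R"
proof -
  define J where "J = {k \<in> I. w k \<noteq> 0}"
  have w_J: "(\<Sum>k\<in>J. w k) = (\<Sum>k\<in>I. w k)"
    using assms(2) by (simp add: J_def sum.inter_filter) (rule sum.cong; simp)
  have kron_J: "(\<Sum>k\<in>J. kron b (outer (x k)) (outer (y k)) r c)
      = (\<Sum>k\<in>I. kron b (outer (x k)) (outer (y k)) r c)" if "r < a * b" for r c
    using assms(2) kron_outer_eq_0[OF that]
    by (simp add: J_def w_def sum.inter_filter) (rule sum.cong; simp)
  have "finite J" and "J \<noteq> {}" and "\<And>k. k \<in> J \<Longrightarrow> w k \<noteq> 0"
    using assms(2,3) w_J by (auto simp: J_def dest: sum.not_neutral_contains_not_neutral)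
  moreover have "R r c = (\<Sum>k\<in>J. kron b (outer (x k)) (outer (y k)) r c) / of_real (\<Sum>k\<in>J. w k)"
    if "r < a * b" and "c < a * b" for r c
    using R[OF that] by (simp only: kron_J[OF that(1)] w_J)
  ultimately show ?thesis
    by (rule separable_sum_kron_outer_nonzero[where a = a and b = b and x = x and y = y, folded w_def])
qed

definition vertex_ket :: "nat \<Rightarrow> nat \<times> nat \<Rightarrow> nat \<Rightarrow> complex" where
  "vertex_ket b u = tensor b (ket (fst u)) (ket (snd u))"

lemma vertex_ket_eq: "vertex_ket b u r = (if vtx b r = u then 1 else 0)"
  by (cases u) (auto simp: vertex_ket_def tensor_def ket_def vtx_def)

lemma inj_vtx: "inj (vtx b)"
  by (rule injI) (metis div_mult_mod_eq prod.inject vtx_def)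

definition edge_laplacian :: "nat \<Rightarrow> (nat \<times> nat) set \<Rightarrow> nat \<Rightarrow> nat \<Rightarrow> complex" where
  "edge_laplacian b e r c = (if vtx b r \<in> e \<and> vtx b c \<in> e then if r = c then 1 else -1 else 0)"

lemma edge_laplacian_doubleton:
  assumes "u \<noteq> v"
  shows "edge_laplacian b {u, v} r c = outer (\<lambda>t. vertex_ket b u t - vertex_ket b v t) r c"
  using assms inj_vtx[of b] by (auto simp: edge_laplacian_def outer_def vertex_ket_eq dest: injD)

lemma laplacian_eq_sum_edge_laplacian:
  assumes "finite E" and "\<And>e. e \<in> E \<Longrightarrow> card e = 2"
  shows "laplacian b E r c = (\<Sum>e\<in>E. edge_laplacian b e r c)"
proof (cases "r = c")
  case True
  then show ?thesis
    using assms(1) by (simp add: laplacian_def edge_laplacian_def sum.If_cases Int_def conj_commute)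
next
  case False
  then have "vtx b r \<noteq> vtx b c"
    using inj_vtx[of b] by (auto dest: injD)
  then have "edge_laplacian b e r c = (if e = {vtx b r, vtx b c} then -1 else 0)" if "e \<in> E" for e
    using assms(2)[OF that] False by (auto simp: edge_laplacian_def card_2_iff)
  then show ?thesis
    using assms(1) False by (simp add: laplacian_def sum.delta' cong: sum.cong)
qed

(* The partner edge of pair-symmetry; non-diagonal edges are fixed by it. *)
definition cross :: "('a \<times> 'b) set \<Rightarrow> ('a \<times> 'b) set" where
  "cross e = {(i, l) | i j k l. (i, j) \<in> e \<and> (k, l) \<in> e \<and> (i, j) \<noteq> (k, l)}"

lemma cross_doubleton:
  assumes "(i, j) \<noteq> (k, l)"
  shows "cross {(i, j), (k, l)} = {(i, l), (k, j)}"
  using assms by (auto simp: cross_def)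

lemma cross_cross:
  assumes "card e = 2"
  shows "cross (cross e) = e"
proof -
  obtain i j k l where "(i, j) \<noteq> (k, l)" and "e = {(i, j), (k, l)}"
    using assms by (auto simp: card_2_iff)
  moreover have "(i, l) \<noteq> (k, j)"
    using \<open>(i, j) \<noteq> (k, l)\<close> by auto
  ultimately show ?thesis
    by (auto simp: cross_doubleton)
qed

lemma cross_mem_pair_symmetric:
  assumes "pair_symmetric E" and "e \<in> E" and "card e = 2"
  shows "cross e \<in> E"
proof -
  obtain i j k l where "(i, j) \<noteq> (k, l)" and e: "e = {(i, j), (k, l)}"
    using assms(3) by (auto simp: card_2_iff)
  then have "cross e = {(i, l), (k, j)}"
    by (simp add: cross_doubleton)
  then show ?thesis
    using assms(1,2) e by (cases "i = k \<or> j = l") (auto simp: pair_symmetric_def insert_commute)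
qed

lemma sum_cross_pair_symmetric:
  assumes "pair_symmetric E" and "\<And>e. e \<in> E \<Longrightarrow> card e = 2"
  shows "(\<Sum>e\<in>E. g (cross e)) = (\<Sum>e\<in>E. g e)"
  by (rule sum.reindex_bij_witness[where i = cross and j = cross])
    (use assms in \<open>auto simp: cross_cross cross_mem_pair_symmetric\<close>)

(* The two vectors on the right are the sum and the difference of the two on the left. *)
lemma outer_parallelogram:
  "outer (\<lambda>r. tensor b x p r - tensor b y q r) r c + outer (\<lambda>r. tensor b x q r - tensor b y p r) r c
    = (kron b (outer (\<lambda>t. x t + y t)) (outer (\<lambda>t. p t - q t)) r c
       + kron b (outer (\<lambda>t. x t - y t)) (outer (\<lambda>t. p t + q t)) r c) / 2"
  by (simp add: outer_def tensor_def kron_def field_simps)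

lemma edge_laplacian_add_cross:
  assumes "(i, j) \<noteq> (k, l)"
  shows "edge_laplacian b {(i, j), (k, l)} r c + edge_laplacian b (cross {(i, j), (k, l)}) r c
    = (\<Sum>\<sigma>\<in>{1, -1}. kron b (outer (\<lambda>t. ket i t + \<sigma> * ket k t))
                               (outer (\<lambda>t. ket j t - \<sigma> * ket l t)) r c) / 2"
proof -
  have "(i, l) \<noteq> (k, j)"
    using assms by auto
  then show ?thesis
    using assms outer_parallelogram[of b "ket i" "ket j" "ket k" "ket l" r c]
    by (simp add: cross_doubleton edge_laplacian_doubleton vertex_ket_def)
qed

definition ends :: "'a set \<Rightarrow> 'a \<times> 'a" where
  "ends e = (SOME (u, v). u \<noteq> v \<and> e = {u, v})"

lemma ends_doubleton:
  assumes "card e = 2" and "ends e = (u, v)"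
  shows "u \<noteq> v \<and> e = {u, v}"
proof -
  obtain x y where "x \<noteq> y \<and> e = {x, y}"
    using assms(1) by (auto simp: card_2_iff)
  then have "(\<lambda>(u, v). u \<noteq> v \<and> e = {u, v}) (ends e)"
    unfolding ends_def by (intro someI[of "\<lambda>(u, v). u \<noteq> v \<and> e = {u, v}" "(x, y)"]) simp
  with assms(2) show ?thesis
    by simp
qed

definition row_factor :: "(nat \<times> nat) set \<Rightarrow> complex \<Rightarrow> nat \<Rightarrow> complex" where
  "row_factor e \<sigma> t = (case ends e of ((i, _), (k, _)) \<Rightarrow> ket i t + \<sigma> * ket k t)"

definition col_factor :: "(nat \<times> nat) set \<Rightarrow> complex \<Rightarrow> nat \<Rightarrow> complex" where
  "col_factor e \<sigma> t = (case ends e of ((_, j), (_, l)) \<Rightarrow> ket j t - \<sigma> * ket l t)"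

lemma factors_ends:
  assumes "ends e = ((i, j), (k, l))"
  shows "row_factor e \<sigma> = (\<lambda>t. ket i t + \<sigma> * ket k t)"
    and "col_factor e \<sigma> = (\<lambda>t. ket j t - \<sigma> * ket l t)"
  using assms by (simp_all add: fun_eq_iff row_factor_def col_factor_def)

lemma laplacian_eq_sum_kron_outer:
  assumes "finite E" and card_edge: "\<And>e. e \<in> E \<Longrightarrow> card e = 2" and "pair_symmetric E"
  shows "laplacian b E r c
    = (\<Sum>(e, \<sigma>)\<in>E \<times> {1, -1}. kron b (outer (row_factor e \<sigma>)) (outer (col_factor e \<sigma>)) r c) / 4"
proof -
  have edge: "edge_laplacian b e r c + edge_laplacian b (cross e) r c
      = (\<Sum>\<sigma>\<in>{1, -1}. kron b (outer (row_factor e \<sigma>)) (outer (col_factor e \<sigma>)) r c) / 2"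
    if "e \<in> E" for e
  proof -
    obtain i j k l where ends: "ends e = ((i, j), (k, l))"
      by (metis prod.collapse)
    then have "(i, j) \<noteq> (k, l)" and "e = {(i, j), (k, l)}"
      using ends_doubleton[OF card_edge[OF that]] by auto
    then show ?thesis
      using edge_laplacian_add_cross[of i j k l b r c] ends by (simp add: factors_ends)
  qed
  have "laplacian b E r c = (\<Sum>e\<in>E. edge_laplacian b e r c)"
    using assms(1) card_edge by (rule laplacian_eq_sum_edge_laplacian)
  also have "\<dots> = ((\<Sum>e\<in>E. edge_laplacian b e r c) + (\<Sum>e\<in>E. edge_laplacian b (cross e) r c)) / 2"
    using sum_cross_pair_symmetric[OF assms(3) card_edge, of "\<lambda>e. edge_laplacian b e r c"] by simp
  also have "\<dots> = (\<Sum>e\<in>E. \<Sum>\<sigma>\<in>{1, -1}. kron b (outer (row_factor e \<sigma>)) (outer (col_factor e \<sigma>)) r c) / 4"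
    by (simp add: edge sum.distrib[symmetric] sum_divide_distrib[symmetric])
  finally show ?thesis
    by (simp only: sum.cartesian_product)
qed

lemma sqnorm_ket_add:
  assumes "i < n" and "k < n"
  shows "sqnorm n (\<lambda>t. ket i t + \<sigma> * ket k t) = (if i = k then (cmod (1 + \<sigma>))\<^sup>2 else 1 + (cmod \<sigma>)\<^sup>2)"
proof (cases "i = k")
  case True
  then have "(cmod (ket i t + \<sigma> * ket k t))\<^sup>2 = (if t = i then (cmod (1 + \<sigma>))\<^sup>2 else 0)" for t
    by (simp add: ket_def)
  then show ?thesis
    using assms True by (simp add: sqnorm_def)
next
  case False
  then have "(cmod (ket i t + \<sigma> * ket k t))\<^sup>2 = (if t = i then 1 else 0) + (if t = k then (cmod \<sigma>)\<^sup>2 else 0)"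
    for t
    by (simp add: ket_def)
  then show ?thesis
    using assms False by (simp add: sqnorm_def sum.distrib)
qed

lemma sum_sqnorm_ket_factors:
  assumes "i < a" and "k < a" and "j < b" and "l < b" and "(i, j) \<noteq> (k, l)"
  shows "(\<Sum>\<sigma>\<in>{1, -1}. sqnorm a (\<lambda>t. ket i t + \<sigma> * ket k t) * sqnorm b (\<lambda>t. ket j t - \<sigma> * ket l t)) = 8"
proof -
  have "sqnorm b (\<lambda>t. ket j t - \<sigma> * ket l t) = (if j = l then (cmod (1 - \<sigma>))\<^sup>2 else 1 + (cmod \<sigma>)\<^sup>2)"
    for \<sigma>
    using sqnorm_ket_add[OF assms(3,4), of "- \<sigma>"] by simp
  then show ?thesis
    using assms sqnorm_ket_add[OF assms(1,2)] by auto
qed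

lemma grid_graph_card_edge:
  assumes "grid_graph a b E" and "e \<in> E"
  shows "card e = 2"
  using assms unfolding grid_graph_def card_2_iff by blast

lemma grid_graph_ends:
  assumes "grid_graph a b E" and "e \<in> E" and "ends e = ((i, j), (k, l))"
  shows "(i, j) \<noteq> (k, l) \<and> i < a \<and> k < a \<and> j < b \<and> l < b"
proof -
  have "(i, j) \<noteq> (k, l)" and "e = {(i, j), (k, l)}"
    using ends_doubleton[OF grid_graph_card_edge[OF assms(1,2)] assms(3)] by auto
  moreover have "e \<subseteq> grid a b"
    using assms(1,2) by (auto simp: grid_graph_def)
  ultimately show ?thesis
    by (simp add: grid_def)
qed

lemma sum_sqnorm_factors_grid_graph:
  assumes "grid_graph a b E"
  shows "(\<Sum>(e, \<sigma>)\<in>E \<times> {1, -1}. sqnorm a (row_factor e \<sigma>) * sqnorm b (col_factor e \<sigma>)) = 8 * card E"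
proof -
  have "(\<Sum>\<sigma>\<in>{1, -1}. sqnorm a (row_factor e \<sigma>) * sqnorm b (col_factor e \<sigma>)) = 8" if "e \<in> E" for e
  proof -
    obtain i j k l where ends: "ends e = ((i, j), (k, l))"
      by (metis prod.collapse)
    then show ?thesis
      using grid_graph_ends[OF assms that ends] sum_sqnorm_ket_factors[of i a k j b l]
      by (simp add: factors_ends)
  qed
  then show ?thesis
    by (simp flip: sum.cartesian_product)
qed

theorem mainTheorem8:
  fixes a b :: nat and E :: "(nat \<times> nat) set set"
  assumes "grid_graph a b E"
    and "card E \<ge> 1"
    and "pair_symmetric E"
  shows "separable a b (rho b E)"
proof -
  have "finite E"
    using assms(2) by (metis card.infinite not_one_le_zero)
  have card_edge: "\<And>e. e \<in> E \<Longrightarrow> card e = 2"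
    using grid_graph_card_edge[OF assms(1)] .
  have "rho b E r c
      = (\<Sum>(e, \<sigma>)\<in>E \<times> {1, -1}. kron b (outer (row_factor e \<sigma>)) (outer (col_factor e \<sigma>)) r c)
        / of_real (\<Sum>(e, \<sigma>)\<in>E \<times> {1, -1}. sqnorm a (row_factor e \<sigma>) * sqnorm b (col_factor e \<sigma>))"
    for r c
    by (simp add: rho_def laplacian_eq_sum_kron_outer[OF \<open>finite E\<close> card_edge assms(3)]
        sum_sqnorm_factors_grid_graph[OF assms(1)])
  then show ?thesis
    using \<open>finite E\<close> assms(2) sum_sqnorm_factors_grid_graph[OF assms(1)]
    by (intro separable_sum_kron_outer[where x = "\<lambda>(e, \<sigma>). row_factor e \<sigma>" and y = "\<lambda>(e, \<sigma>). col_factor e \<sigma>"])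
      (auto simp: split_def)
qed

end
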